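(* Let $\mu,\nu$ be Lipschitz continuous on $\mathbb D$, $R>0$, $L\ge1$ an integer, $z_i,w_j\in\mathbb D$. Then $$|d^R_{\mu,\nu}(z_i,w_j)-\hat{\hat d}^R_{\mu,\nu}(z_i,w_j)|\le C_1\varphi_E(\{p_k\})+C_2L^{-1},$$ with $C_1,C_2$ depending only on $\mu,\nu,R$.
   Context: Notation as follows: $\mathbb D$ open unit disk, $d\mathrm{vol}_H=(1-|z|^2)^{-2}dx^1\wedge dx^2$, $M_{\mathbb D}$ the maps $e^{i\theta}(z-a)/(1-\bar az)$, $\Omega_{z_0,R}$ the hyperbolic disk of radius $R$ about $z_0$ ($\Omega_{0,R}=\{|z|\le\tanh R\}$), $d^R_{\mu,\nu}(z_0,w_0)=\inf_{m\in M_{\mathbb D},m(z_0)=w_0}\int_{\Omega_{z_0,R}}|\mu(z)-\nu(m(z))|d\mathrm{vol}_H(z)$. Quadrature centers $p_k\in\Omega_{0,R}$, weights $\alpha_k$ = hyperbolic area of $\Omega_{0,R}\cap(\text{Euclidean Voronoi cell of }p_k)$, $\varphi_E(\{p_k\})$ the Euclidean fill distance of $\{p_k\}$ in $\Omega_{0,R}$. Fixed $\tilde m_i,\tilde m_j\in M_{\mathbb D}$ with $\tilde m_i(0)=z_i$, $\tilde m_j(0)=w_j$; $m_{z_i,w_j,2\pi\ell/L}=\tilde m_j\circ\mathfrak R_\ell\circ\tilde m_i^{-1}$ with $\mathfrak R_\ell(z)=e^{2\pi i\ell/L}z$, and $\hat{\hat d}^R_{\mu,\nu}(z_i,w_j)=\min_{\ell=1,\dots,L}\sum_k\alpha_k|\mu(\tilde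 m_i(p_k))-\nu(m_{z_i,w_j,2\pi\ell/L}(\tilde m_i(p_k)))|$. *)

theory Defs
  imports "HOL-Analysis.Analysis"
begin

definition hyp_density :: "complex \<Rightarrow> real" where
  "hyp_density z = 1 / (1 - (cmod z)\<^sup>2)\<^sup>2"

definition mobius_D :: "(complex \<Rightarrow> complex) set" where
  "mobius_D = {f. \<exists>a \<theta>. cmod a < 1 \<and>
      f = (\<lambda>z. exp (\<i> * complex_of_real \<theta>) * (z - a) / (1 - cnj a * z))}"

text \<open>Closed hyperbolic disk of radius R about z0 (so that hyp_disk 0 R = {|z| <= tanh R}).\<close>
definition hyp_disk :: "complex \<Rightarrow> real \<Rightarrow> complex set" where
  "hyp_disk z0 R = {z \<in> ball 0 1. cmod ((z - z0) / (1 - cnj z0 * z)) \<le> tanh R}"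

definition dR :: "(complex \<Rightarrow> real) \<Rightarrow> (complex \<Rightarrow> real) \<Rightarrow> real \<Rightarrow> complex \<Rightarrow> complex \<Rightarrow> real" where
  "dR \<mu> \<nu> R z0 w0 = (INF m \<in> {m \<in> mobius_D. m z0 = w0}.
      LINT z:hyp_disk z0 R|lborel. hyp_density z * \<bar>\<mu> z - \<nu> (m z)\<bar>)"

definition voronoi :: "complex set \<Rightarrow> complex \<Rightarrow> complex set" where
  "voronoi P p = {z. \<forall>q\<in>P. cmod (z - p) \<le> cmod (z - q)}"

definition quad_weight :: "real \<Rightarrow> complex set \<Rightarrow> complex \<Rightarrow> real" where
  "quad_weight R P p = (LINT z:(hyp_disk 0 R \<inter> voronoi P p)|lborel. hyp_density z)"

definition fill_dist :: "real \<Rightarrow> complex set \<Rightarrow> real" where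
  "fill_dist R P = (SUP z \<in> hyp_disk 0 R. INF p \<in> P. cmod (z - p))"

definition rot :: "nat \<Rightarrow> nat \<Rightarrow> complex \<Rightarrow> complex" where
  "rot L l z = exp (2 * pi * \<i> * of_nat l / of_nat L) * z"

text \<open>The discretized distance; mi, mj are the fixed automorphisms with mi 0 = z_i, mj 0 = w_j.\<close>
definition dhh :: "(complex \<Rightarrow> real) \<Rightarrow> (complex \<Rightarrow> real) \<Rightarrow> real \<Rightarrow> complex set \<Rightarrow> nat
    \<Rightarrow> (complex \<Rightarrow> complex) \<Rightarrow> (complex \<Rightarrow> complex) \<Rightarrow> real" where
  "dhh \<mu> \<nu> R P L mi mj = Min ((\<lambda>l. \<Sum>p\<in>P. quad_weight R P p *
      \<bar>\<mu> (mi p) - \<nu> ((mj \<circ> rot L l \<circ> inv_into (ball 0 1) mi) (mi p))\<bar>) ` {1..L})"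

end

theory Submission
  imports Defs
begin

(*
  Write every disk automorphism as  mob a t z = cis t (z - a) / (1 - conj a z).  Pulling the
  local distance back by the fixed automorphisms  mi = mob a1 t1,  mj = mob a2 t2  turns it into
  an infimum over rotation angles theta of one integral over the disk of Euclidean radius tanh R,
      J(theta) = integral of hyp_density(u) |mu(mi u) - nu(mj (cis theta u))| du,
  because hyperbolic area is automorphism invariant (change of variables with Jacobian |m'|^2)
  and the automorphisms carrying zi to wj are, in these coordinates, exactly the rotations.
  The discretised distance is the minimum of the Voronoi quadratures S(2 pi l / L) of the same
  integrand.  Both pulled-back functions are Lipschitz on the closed disk, so
    (1) |J - S| <= Lip * fill distance * area   (Voronoi quadrature of a Lipschitz integrand),
    (2) |J(theta) - J(theta')| <= Lip * |cis theta - cis theta'| * area,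
    (3) every angle is within 2 pi / L of a grid angle,
  which together bound |inf J - min S| and give the theorem.
*)

section \<open>Disk automorphisms\<close>

definition mob :: "complex \<Rightarrow> real \<Rightarrow> complex \<Rightarrow> complex" where
  "mob a t z = cis t * (z - a) / (1 - cnj a * z)"

lemma mobius_D_eq: "mobius_D = {f. \<exists>a t. cmod a < 1 \<and> f = mob a t}"
  unfolding mobius_D_def mob_def[abs_def] cis_conv_exp by simp

lemma mob_0: "mob a t 0 = - (cis t * a)"
  by (simp add: mob_def)

lemma mob_rotation: "mob 0 t z = cis t * z"
  by (simp add: mob_def)

lemma mob_0_in_ball: "cmod a < 1 \<Longrightarrow> cmod (mob a t 0) < 1"
  by (simp add: mob_0 norm_mult)

lemma mob_denom_nonzero:
  assumes "cmod a < 1" "cmod z \<le> 1" shows "1 - cnj a * z \<noteq> 0"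
proof -
  have "cmod (cnj a * z) \<le> cmod a" using assms by (simp add: norm_mult mult_left_le)
  then show ?thesis using assms(1) by auto
qed

lemma mob_denom_identity:
  "(cmod (1 - cnj a * z))\<^sup>2 = (cmod (z - a))\<^sup>2 + (1 - (cmod a)\<^sup>2) * (1 - (cmod z)\<^sup>2)"
proof -
  have "(1 - cnj a * z) * (1 - a * cnj z)
      = (z - a) * (cnj z - cnj a) + (1 - a * cnj a) * (1 - z * cnj z)"
    by (simp add: algebra_simps)
  then have "complex_of_real ((cmod (1 - cnj a * z))\<^sup>2)
      = complex_of_real ((cmod (z - a))\<^sup>2 + (1 - (cmod a)\<^sup>2) * (1 - (cmod z)\<^sup>2))"
    unfolding of_real_add of_real_mult of_real_diff of_real_1 complex_norm_square by simp
  then show ?thesis by (simp only: of_real_eq_iff)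
qed

text \<open>How an automorphism distorts \<open>1 - |z|\<^sup>2\<close>; this is what makes the hyperbolic density invariant.\<close>
lemma one_minus_norm_mob:
  assumes "cmod a < 1" "cmod z \<le> 1"
  shows "1 - (cmod (mob a t z))\<^sup>2 = (1 - (cmod a)\<^sup>2) * (1 - (cmod z)\<^sup>2) / (cmod (1 - cnj a * z))\<^sup>2"
proof -
  define D where "D = cmod (1 - cnj a * z)"
  have D: "D\<^sup>2 > 0" unfolding D_def using mob_denom_nonzero[OF assms] by simp
  have "cmod (mob a t z) = cmod (z - a) / D"
    unfolding D_def by (simp add: mob_def norm_mult norm_divide)
  then have "1 - (cmod (mob a t z))\<^sup>2 = (D\<^sup>2 - (cmod (z - a))\<^sup>2) / D\<^sup>2"
    using D by (simp add: power_divide diff_divide_distrib)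
  then show ?thesis using mob_denom_identity[of a z] unfolding D_def by simp
qed

lemma mob_in_ball: assumes "cmod a < 1" "cmod z < 1" shows "cmod (mob a t z) < 1"
proof -
  have "(1 - (cmod a)\<^sup>2) > 0" "(1 - (cmod z)\<^sup>2) > 0" "(cmod (1 - cnj a * z))\<^sup>2 > 0"
    using assms mob_denom_nonzero[of a z] by (simp_all add: abs_square_less_1)
  then have "1 - (cmod (mob a t z))\<^sup>2 > 0" using one_minus_norm_mob[of a z t] assms by simp
  then show ?thesis by (simp add: abs_square_less_1)
qed

lemma mob_left_inverse:
  assumes "cmod a < 1" "cmod z < 1"
  shows "mob (mob a t 0) (- t) (mob a t z) = z"
proof -
  define e where "e = cis t"
  have e0: "e \<noteq> 0" and ce: "cnj e = inverse e" and em: "cis (- t) = inverse e"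
    unfolding e_def by (simp_all add: cis_cnj)
  have d: "1 - cnj a * z \<noteq> 0" using mob_denom_nonzero assms by simp
  have aa: "1 - a * cnj a \<noteq> 0"
    using mob_denom_nonzero[of a a] assms(1) by (simp add: mult.commute)
  define w where "w = e * (z - a) / (1 - cnj a * z)"
  have num: "w + e * a = e * z * (1 - a * cnj a) / (1 - cnj a * z)"
    unfolding w_def using d by (simp add: field_simps)
  have den: "1 - cnj (- (e * a)) * w = (1 - a * cnj a) / (1 - cnj a * z)"
    unfolding w_def using d e0 by (simp add: field_simps ce)
  have "mob (- (e * a)) (- t) w = inverse e * (w + e * a) / (1 - cnj (- (e * a)) * w)"
    unfolding mob_def em by simp
  also have "\<dots> = z"
  proof -
    have "inverse e * (e * z * A / B) / (A / B) = z" if "A \<noteq> 0" "B \<noteq> 0" for A B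
      using that e0 by (simp add: field_simps)
    then show ?thesis unfolding num den using d aa by blast
  qed
  finally show ?thesis unfolding mob_0 unfolding w_def e_def mob_def .
qed

lemma mob_right_inverse:
  assumes "cmod a < 1" "cmod z < 1"
  shows "mob a t (mob (mob a t 0) (- t) z) = z"
proof -
  have "mob (mob (mob a t 0) (- t) 0) (- (- t)) = mob a t"
    by (simp add: mob_0 mult.assoc[symmetric] cis_mult)
  moreover have "mob (mob (mob a t 0) (- t) 0) (- (- t)) (mob (mob a t 0) (- t) z) = z"
    by (rule mob_left_inverse[OF mob_0_in_ball[OF assms(1)] assms(2)])
  ultimately show ?thesis by simp
qed

lemma mob_maps_ball: "cmod a < 1 \<Longrightarrow> mob a t ` ball 0 1 \<subseteq> ball 0 1"
  using mob_in_ball by auto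

lemma inj_on_mob: "cmod a < 1 \<Longrightarrow> inj_on (mob a t) (ball 0 1)"
  by (rule inj_on_inverseI[where g = "mob (mob a t 0) (- t)"]) (simp add: mob_left_inverse)

lemma continuous_on_mob: assumes "cmod a < 1" shows "continuous_on (ball 0 1) (mob a t)"
proof -
  have "\<forall>z\<in>ball 0 1. 1 - cnj a * z \<noteq> 0" using mob_denom_nonzero[OF assms] by auto
  then show ?thesis unfolding mob_def[abs_def] by (intro continuous_intros) auto
qed

lemma unit_eq_cis: assumes "cmod u = 1" shows "\<exists>t. cis t = u"
proof -
  have "cis (Arg u) = sgn u" using assms by (intro cis_Arg) auto
  also have "\<dots> = u" using assms by (simp add: sgn_div_norm)
  finally show ?thesis by blast
qed

lemma mob_compose_formula:
  fixes a1 a2 z :: complex and t1 t2 :: real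
  defines "c \<equiv> 1 + cnj a1 * cis t2 * a2"
  defines "a \<equiv> (cis t2 * a2 + a1) / (cis t2 * cnj c)"
  assumes a1: "cmod a1 < 1" and a2: "cmod a2 < 1" and z: "cmod z < 1" and c0: "c \<noteq> 0"
  shows "mob a1 t1 (mob a2 t2 z) = (cis t1 * cis t2 * cnj c / c) * (z - a) / (1 - cnj a * z)"
proof -
  define e2 where "e2 = cis t2"
  have e2: "e2 \<noteq> 0" "cnj e2 * e2 = 1" unfolding e2_def by (simp_all add: cis_cnj cis_mult)
  have ec: "e2 * cnj c * a = e2 * a2 + a1" unfolding a_def e2_def[symmetric] using e2 c0 by simp
  have ec': "e2 * cnj c = e2 + a1 * cnj a2"
    unfolding c_def e2_def[symmetric] using e2(2) by (simp add: algebra_simps)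
  have ca: "c * cnj a = cnj a2 + e2 * cnj a1"
  proof -
    have "c * cnj a = cnj (e2 * a2 + a1) / cnj e2" unfolding a_def e2_def[symmetric] using c0 by simp
    also have "\<dots> = cnj a2 + e2 * cnj a1"
    proof -
      have "inverse (cnj e2) = e2" using e2(2) by (simp add: inverse_unique)
      then show ?thesis using e2(2) by (simp add: add_divide_distrib divide_inverse algebra_simps)
    qed
    finally show ?thesis .
  qed
  define B where "B = 1 - cnj a2 * z"
  have B: "B \<noteq> 0" unfolding B_def using mob_denom_nonzero[OF a2] z by simp
  have num: "e2 * (z - a2) - a1 * B = e2 * cnj c * (z - a)"
    unfolding right_diff_distrib ec unfolding ec' B_def by (simp add: algebra_simps)
  have den: "B - cnj a1 * (e2 * (z - a2)) = c * (1 - cnj a * z)"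
    unfolding right_diff_distrib mult.assoc[symmetric] ca B_def
    by (simp add: c_def e2_def algebra_simps)
  have "mob a2 t2 z - a1 = (e2 * (z - a2) - a1 * B) / B"
    and "1 - cnj a1 * mob a2 t2 z = (B - cnj a1 * (e2 * (z - a2))) / B"
    using B unfolding mob_def e2_def B_def[symmetric] by (simp_all add: diff_divide_distrib)
  then have "mob a1 t1 (mob a2 t2 z) = cis t1 * (e2 * (z - a2) - a1 * B) / (B - cnj a1 * (e2 * (z - a2)))"
    using B unfolding mob_def[of a1] by simp
  also have "\<dots> = (cis t1 * cis t2 * cnj c / c) * (z - a) / (1 - cnj a * z)"
    unfolding num den unfolding e2_def by (simp add: divide_inverse ac_simps)
  finally show ?thesis .
qed

text \<open>Disk automorphisms are closed under composition (on the disk): the composite has centre of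
  modulus \<open>< 1\<close> because of the identity for the normalising constant, and a unimodular factor.\<close>
lemma mob_compose:
  assumes a1: "cmod a1 < 1" and a2: "cmod a2 < 1"
  shows "\<exists>a t. cmod a < 1 \<and> (\<forall>z. cmod z < 1 \<longrightarrow> mob a1 t1 (mob a2 t2 z) = mob a t z)"
proof -
  define b where "b = cis t2 * a2 + a1"
  define c where "c = 1 + cnj a1 * cis t2 * a2"
  have "(cmod c)\<^sup>2 = (cmod b)\<^sup>2 + (1 - (cmod a1)\<^sup>2) * (1 - (cmod a2)\<^sup>2)"
    using mob_denom_identity[of "- a1" "cis t2 * a2"] unfolding b_def c_def
    by (simp add: norm_mult algebra_simps)
  moreover have "(1 - (cmod a1)\<^sup>2) * (1 - (cmod a2)\<^sup>2) > 0"
    using a1 a2 by (intro mult_pos_pos) (simp_all add: abs_square_less_1)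
  ultimately have "(cmod b)\<^sup>2 < (cmod c)\<^sup>2" by linarith
  then have bc: "cmod b < cmod c" by (rule power_less_imp_less_base) simp
  then have c0: "c \<noteq> 0" by auto
  define a where "a = b / (cis t2 * cnj c)"
  have a: "cmod a < 1" unfolding a_def using bc c0 by (simp add: norm_divide norm_mult)
  have "cmod (cis t1 * cis t2 * cnj c / c) = 1" using c0 by (simp add: norm_mult norm_divide)
  then obtain t where t: "cis t = cis t1 * cis t2 * cnj c / c" using unit_eq_cis by metis
  have "mob a1 t1 (mob a2 t2 z) = mob a t z" if "cmod z < 1" for z
    using mob_compose_formula[OF a1 a2 that, of t2 t1] c0
    unfolding mob_def t a_def b_def c_def by simp
  then show ?thesis using a by blast
qed

definition mob_deriv :: "complex \<Rightarrow> real \<Rightarrow> complex \<Rightarrow> complex" where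
  "mob_deriv a t z = cis t * (1 - cnj a * a) / (1 - cnj a * z)\<^sup>2"

lemma has_field_derivative_mob:
  assumes "1 - cnj a * z \<noteq> 0"
  shows "(mob a t has_field_derivative mob_deriv a t z) (at z)"
proof -
  have "mob a t = (\<lambda>z. cis t * (z - a) / (1 - cnj a * z))" by (rule ext) (simp add: mob_def)
  then show ?thesis unfolding mob_deriv_def using assms
    by (auto intro!: derivative_eq_intros simp: field_simps power2_eq_square)
qed

lemma continuous_on_mob_deriv:
  assumes "cmod a < 1" "r < 1" shows "continuous_on (cball 0 r) (mob_deriv a t)"
proof -
  have "\<forall>z\<in>cball 0 r. (1 - cnj a * z)\<^sup>2 \<noteq> 0" using mob_denom_nonzero assms by auto
  then show ?thesis unfolding mob_deriv_def[abs_def] by (intro continuous_intros) auto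
qed

lemma norm_mob_deriv:
  assumes "cmod a < 1"
  shows "cmod (mob_deriv a t z) = (1 - (cmod a)\<^sup>2) / (cmod (1 - cnj a * z))\<^sup>2"
proof -
  have "complex_of_real ((cmod a)\<^sup>2) = cnj a * a" by (simp only: complex_norm_square mult.commute)
  then have eq: "1 - cnj a * a = complex_of_real (1 - (cmod a)\<^sup>2)" by simp
  have "\<bar>1 - (cmod a)\<^sup>2\<bar> = 1 - (cmod a)\<^sup>2"
    using assms abs_square_less_1[of "cmod a"] by simp
  then have "cmod (complex_of_real (1 - (cmod a)\<^sup>2)) = 1 - (cmod a)\<^sup>2" by (simp only: norm_of_real)
  then show ?thesis unfolding mob_deriv_def eq
    by (simp only: norm_mult norm_divide norm_power norm_cis mult_1_left)
qed

lemma hyp_density_mob: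
  assumes a: "cmod a < 1" and z: "cmod z < 1"
  shows "hyp_density (mob a t z) * (cmod (mob_deriv a t z))\<^sup>2 = hyp_density z"
proof -
  have pos: "1 - (cmod a)\<^sup>2 > 0" "1 - (cmod z)\<^sup>2 > 0" "cmod (1 - cnj a * z) > 0"
    using a z mob_denom_nonzero[OF a, of z] by (simp_all add: abs_square_less_1)
  have "1 / (A * Z / Q\<^sup>2)\<^sup>2 * (A / Q\<^sup>2)\<^sup>2 = 1 / Z\<^sup>2" if "A > 0" "Z > 0" "Q > 0" for A Z Q :: real
    using that by (simp add: field_simps power2_eq_square)
  from this[OF pos] show ?thesis
    unfolding norm_mob_deriv[OF a] hyp_density_def one_minus_norm_mob[OF a less_imp_le[OF z]] .
qed

lemma lipschitz_on_mob:
  assumes a: "cmod a < 1" and r: "r < 1"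
  shows "(2 / (1 - r))-lipschitz_on (cball 0 r) (mob a t)"
proof (rule lipschitz_onI)
  show "0 \<le> 2 / (1 - r)" using r by simp
  fix u v :: complex assume "u \<in> cball 0 r" "v \<in> cball 0 r"
  then have u: "cmod u \<le> r" and v: "cmod v \<le> r" by auto
  have lower: "cmod (1 - cnj a * w) \<ge> 1 - cmod a" "cmod (1 - cnj a * w) \<ge> 1 - r"
    if "cmod w \<le> r" for w
  proof -
    have t: "cmod (1 - cnj a * w) \<ge> 1 - cmod a * cmod w"
      using norm_triangle_ineq2[of 1 "cnj a * w"] by (simp add: norm_mult)
    have "cmod a * cmod w \<le> cmod a" using that r by (simp add: mult_left_le)
    then show "cmod (1 - cnj a * w) \<ge> 1 - cmod a" using t by simp
    have "cmod a * cmod w \<le> cmod w" using a by (simp add: mult_left_le_one_le)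
    then show "cmod (1 - cnj a * w) \<ge> 1 - r" using t that by simp
  qed
  have "mob a t u - mob a t v = mob_deriv a t 0 * (u - v) / ((1 - cnj a * u) * (1 - cnj a * v))"
    using mob_denom_nonzero[OF a, of u] mob_denom_nonzero[OF a, of v] u v r
    by (simp add: mob_def mob_deriv_def field_simps)
  then have "dist (mob a t u) (mob a t v)
      = (1 - (cmod a)\<^sup>2) * cmod (u - v) / (cmod (1 - cnj a * u) * cmod (1 - cnj a * v))"
    by (simp add: dist_norm norm_mob_deriv[OF a] norm_mult norm_divide)
  also have "\<dots> \<le> (1 - cmod a) * (2 * cmod (u - v)) / ((1 - cmod a) * (1 - r))"
  proof (rule frac_le)
    have "1 - (cmod a)\<^sup>2 \<le> 2 * (1 - cmod a)"
      using zero_le_power2[of "1 - cmod a"] by (simp add: power2_eq_square algebra_simps)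
    then have "(1 - (cmod a)\<^sup>2) * cmod (u - v) \<le> (2 * (1 - cmod a)) * cmod (u - v)"
      by (rule mult_right_mono) simp
    then show "(1 - (cmod a)\<^sup>2) * cmod (u - v) \<le> (1 - cmod a) * (2 * cmod (u - v))"
      by (simp only: mult.commute mult.left_commute)
    show "0 \<le> (1 - cmod a) * (2 * cmod (u - v))" using a by simp
    show "0 < (1 - cmod a) * (1 - r)" using a r by simp
    show "(1 - cmod a) * (1 - r) \<le> cmod (1 - cnj a * u) * cmod (1 - cnj a * v)"
      using lower(1)[OF u] lower(2)[OF v] a r by (intro mult_mono) auto
  qed
  also have "\<dots> = 2 / (1 - r) * dist u v"
    using a by (subst nonzero_mult_divide_mult_cancel_left) (auto simp: dist_norm)
  finally show "dist (mob a t u) (mob a t v) \<le> 2 / (1 - r) * dist u v" .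
qed

lemma hyp_disk_0: "hyp_disk 0 R = cball 0 (tanh R)"
  using tanh_real_lt_1[of R] by (auto simp: hyp_disk_def)

lemma hyp_disk_mob:
  assumes a: "cmod a < 1"
  shows "hyp_disk (mob a t 0) R = mob a t ` cball 0 (tanh R)"
proof -
  define z0 where "z0 = mob a t 0"
  have z0: "cmod z0 < 1" unfolding z0_def by (rule mob_0_in_ball[OF a])
  have pseudo_dist: "cmod ((z - z0) / (1 - cnj z0 * z)) = cmod (mob z0 (- t) z)" for z
    by (simp add: mob_def norm_mult norm_divide)
  have r1: "tanh R < 1" by (rule tanh_real_lt_1)
  show ?thesis unfolding z0_def[symmetric]
  proof
    show "hyp_disk z0 R \<subseteq> mob a t ` cball 0 (tanh R)"
    proof
      fix z assume "z \<in> hyp_disk z0 R"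
      then have z: "cmod z < 1" "cmod (mob z0 (- t) z) \<le> tanh R"
        unfolding hyp_disk_def pseudo_dist by auto
      have "z = mob a t (mob z0 (- t) z)" unfolding z0_def using mob_right_inverse[OF a z(1)] by simp
      then show "z \<in> mob a t ` cball 0 (tanh R)" using z(2) by auto
    qed
    show "mob a t ` cball 0 (tanh R) \<subseteq> hyp_disk z0 R"
    proof
      fix z assume "z \<in> mob a t ` cball 0 (tanh R)"
      then obtain u where u: "cmod u \<le> tanh R" "z = mob a t u" by auto
      have u1: "cmod u < 1" using u r1 by simp
      have "mob z0 (- t) z = u" unfolding z0_def u(2) by (rule mob_left_inverse[OF a u1])
      then show "z \<in> hyp_disk z0 R"
        unfolding hyp_disk_def pseudo_dist using u mob_in_ball[OF a u1] by simp
    qed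
  qed
qed

section \<open>Change of variables for holomorphic maps\<close>

text \<open>The identification \<open>\<real>\<^sup>2 \<cong> \<complex>\<close>: the library's change-of-variables theorem is stated
  for \<open>real^n\<close>, so integrals over the plane are transported there and back.\<close>
definition complex_of_vec :: "real^2 \<Rightarrow> complex" where
  "complex_of_vec x = Complex (x$1) (x$2)"

definition vec_of_complex :: "complex \<Rightarrow> real^2" where
  "vec_of_complex z = vector [Re z, Im z]"

lemma vec_of_complex_nth [simp]: "vec_of_complex z $ 1 = Re z" "vec_of_complex z $ 2 = Im z"
  by (simp_all add: vec_of_complex_def)

lemma complex_of_vec_inverse [simp]: "complex_of_vec (vec_of_complex z) = z"
  by (simp add: complex_of_vec_def complex_eq_iff)

lemma vec_of_complex_inverse [simp]: "vec_of_complex (complex_of_vec x) = x"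
  by (simp add: complex_of_vec_def vec_eq_iff forall_2)

lemma complex_of_vec_axis [simp]: "complex_of_vec (axis 1 1) = 1" "complex_of_vec (axis 2 1) = \<i>"
  by (simp_all add: complex_of_vec_def complex_eq_iff axis_def)

lemma bounded_linear_complex_of_vec: "bounded_linear complex_of_vec"
  by (auto simp: linear_iff complex_of_vec_def complex_eq_iff linear_conv_bounded_linear[symmetric])

lemma bounded_linear_vec_of_complex: "bounded_linear vec_of_complex"
  by (auto simp: linear_iff vec_of_complex_def vec_eq_iff forall_2 linear_conv_bounded_linear[symmetric])

lemma complex_of_vec_measurable: "complex_of_vec \<in> lborel \<rightarrow>\<^sub>M borel"
proof -
  have "complex_of_vec \<in> borel_measurable borel"
    by (intro borel_measurable_continuous_onI linear_continuous_on bounded_linear_complex_of_vec)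
  then show ?thesis by (simp add: measurable_cong_sets[OF sets_lborel refl])
qed

lemma distr_complex_of_vec: "distr lborel borel complex_of_vec = lborel"
proof (rule lborel_eqI[symmetric])
  show "sets (distr lborel borel complex_of_vec) = sets borel" by simp
  fix l u :: complex
  assume le: "\<And>b. b \<in> Basis \<Longrightarrow> l \<bullet> b \<le> u \<bullet> b"
  have basis: "(Basis :: (real^2) set) = {axis 1 1, axis 2 1}"
    by (auto simp: Basis_vec_def) (metis exhaust_2)
  have axes: "axis 1 1 \<noteq> (axis 2 1 :: real^2)" by (simp add: axis_eq_axis)
  have box: "complex_of_vec -` box l u = box (vec_of_complex l) (vec_of_complex u)"
    by (auto simp: mem_box_cart mem_box Basis_complex_def inner_complex_def forall_2 complex_of_vec_def)
  have "Re l \<le> Re u" "Im l \<le> Im u"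
    using le[of 1] le[of \<i>] by (auto simp: Basis_complex_def inner_complex_def)
  then have "\<forall>b\<in>Basis. vec_of_complex l \<bullet> b \<le> vec_of_complex u \<bullet> b"
    unfolding basis by (simp add: inner_axis)
  moreover have prod2: "(\<Prod>b\<in>(Basis::(real^2) set). f b) = f (axis 1 1) * f (axis 2 1)" for f
    using axes unfolding basis by simp
  ultimately have "emeasure lborel (box (vec_of_complex l) (vec_of_complex u)) = (\<Prod>b\<in>Basis. (u - l) \<bullet> b)"
    by (simp add: emeasure_lborel_box prod2 inner_axis Basis_complex_def inner_complex_def)
  moreover have "emeasure (distr lborel borel complex_of_vec) (box l u)
      = emeasure lborel (complex_of_vec -` box l u)"
    using complex_of_vec_measurable by (simp add: emeasure_distr)
  ultimately show "emeasure (distr lborel borel complex_of_vec) (box l u) = (\<Prod>b\<in>Basis. (u - l) \<bullet> b)"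
    unfolding box by simp
qed

lemma set_integral_as_vec:
  fixes h :: "complex \<Rightarrow> real"
  assumes A: "compact A" and h: "continuous_on A h"
  shows "(LINT z:A|lborel. h z) = (LINT x:(vec_of_complex ` A)|lborel. h (complex_of_vec x))"
proof -
  have int: "integrable lborel (\<lambda>z. indicator A z *\<^sub>R h z)" by (rule borel_integrable_compact[OF A h])
  have meas: "(\<lambda>z. indicator A z *\<^sub>R h z) \<in> borel_measurable borel"
    using borel_measurable_integrable[OF int] by (simp add: measurable_cong_sets[OF sets_lborel refl])
  have "complex_of_vec x \<in> A \<longleftrightarrow> x \<in> vec_of_complex ` A" for x
    by (metis complex_of_vec_inverse vec_of_complex_inverse image_iff)
  then have ind: "indicator A (complex_of_vec x) = (indicator (vec_of_complex ` A) x :: real)" for x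
    by (simp add: indicator_def)
  have "(LINT z:A|lborel. h z) = integral\<^sup>L (distr lborel borel complex_of_vec) (\<lambda>z. indicator A z *\<^sub>R h z)"
    unfolding set_lebesgue_integral_def distr_complex_of_vec ..
  also have "\<dots> = (LINT x|lborel. indicator A (complex_of_vec x) *\<^sub>R h (complex_of_vec x))"
    by (rule integral_distr[OF complex_of_vec_measurable meas])
  finally show ?thesis unfolding ind set_lebesgue_integral_def .
qed

lemma integral_continuous_compact:
  fixes h :: "'a::euclidean_space \<Rightarrow> real"
  assumes A: "compact A" and h: "continuous_on A h"
  shows "(LINT x:A|lborel. h x) = integral A h" "h integrable_on A" "h absolutely_integrable_on A"
proof -
  have si: "set_integrable lborel A h"
    unfolding set_integrable_def by (rule borel_integrable_compact[OF A h])
  then show "(LINT x:A|lborel. h x) = integral A h" "h integrable_on A"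
    using set_borel_integral_eq_integral by auto
  have "set_integrable lborel A (\<lambda>x. norm (h x))"
    unfolding set_integrable_def by (rule borel_integrable_compact[OF A]) (intro continuous_intros h)
  then show "h absolutely_integrable_on A" unfolding absolutely_integrable_on_def
    using set_borel_integral_eq_integral(1) si by auto
qed

lemma det_complex_mult: "det (matrix (\<lambda>h. vec_of_complex (c * complex_of_vec h))) = (cmod c)\<^sup>2"
  using cmod_power2[of c] by (simp add: det_2 matrix_def power2_eq_square)

lemma has_derivative_as_vec:
  assumes "(g has_field_derivative d) (at (complex_of_vec x))"
  shows "((\<lambda>x. vec_of_complex (g (complex_of_vec x))) has_derivative
           (\<lambda>h. vec_of_complex (d * complex_of_vec h))) (at x within T)"
proof -
  have "(g has_derivative (\<lambda>h. d * h)) (at (complex_of_vec x))"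
    using assms unfolding has_field_derivative_def .
  from has_derivative_compose[OF bounded_linear_imp_has_derivative[OF bounded_linear_complex_of_vec] this]
  have "((\<lambda>x. g (complex_of_vec x)) has_derivative (\<lambda>h. d * complex_of_vec h)) (at x within T)" .
  from has_derivative_compose[OF this bounded_linear_imp_has_derivative[OF bounded_linear_vec_of_complex]]
  show ?thesis by simp
qed

lemma inj_on_as_vec:
  assumes "inj_on g S"
  shows "inj_on (\<lambda>x. vec_of_complex (g (complex_of_vec x))) (vec_of_complex ` S)"
  using assms by (auto simp: inj_on_def) (metis complex_of_vec_inverse)

text \<open>Proved by transport to \<open>\<real>\<^sup>2\<close>, where the library's theorem applies.\<close>
lemma change_of_variables_holomorphic:
  fixes g g' :: "complex \<Rightarrow> complex" and f :: "complex \<Rightarrow> real"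
  assumes S: "compact S" and dg: "\<And>x. x \<in> S \<Longrightarrow> (g has_field_derivative g' x) (at x)"
    and inj: "inj_on g S" and cf: "continuous_on (g ` S) f" and cg': "continuous_on S g'"
  shows "(LINT z:(g ` S)|lborel. f z) = (LINT x:S|lborel. (cmod (g' x))\<^sup>2 * f (g x))"
proof -
  note cont_vec = linear_continuous_on[OF bounded_linear_vec_of_complex]
  note cont_cpx = linear_continuous_on[OF bounded_linear_complex_of_vec]
  have cg: "continuous_on S g"
    using dg by (meson DERIV_isCont continuous_at_imp_continuous_on)
  define S2 where "S2 = vec_of_complex ` S"
  define T2 where "T2 = vec_of_complex ` (g ` S)"
  have S2: "compact S2" unfolding S2_def by (rule compact_continuous_image[OF cont_vec S])
  have T2: "compact T2" unfolding T2_def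
    by (rule compact_continuous_image[OF cont_vec compact_continuous_image[OF cg S]])
  have cpx_S2: "complex_of_vec ` S2 = S" unfolding S2_def by (simp add: image_image)
  define G where "G = (\<lambda>x. vec_of_complex (g (complex_of_vec x)))"
  define G' where "G' = (\<lambda>x h. vec_of_complex (g' (complex_of_vec x) * complex_of_vec h))"
  have dG: "(G has_derivative G' x) (at x within S2)" if "x \<in> S2" for x
    unfolding G_def G'_def using that cpx_S2 by (intro has_derivative_as_vec dg) blast
  have injG: "inj_on G S2" unfolding G_def S2_def by (rule inj_on_as_vec[OF inj])
  have GS: "G ` S2 = T2" unfolding G_def S2_def T2_def by (simp add: image_image)
  define F where "F = (\<lambda>y. f (complex_of_vec y))"
  define H where "H = (\<lambda>x. (cmod (g' (complex_of_vec x)))\<^sup>2 * f (g (complex_of_vec x)))"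
  have cF: "continuous_on T2 F" unfolding F_def T2_def
    by (rule continuous_on_compose2[OF cf cont_cpx]) (auto simp: image_image)
  have cgf: "continuous_on S (\<lambda>x. (cmod (g' x))\<^sup>2 * f (g x))"
    by (intro continuous_intros cg' continuous_on_compose2[OF cf cg]) auto
  have cH: "continuous_on S2 H" unfolding H_def
    by (rule continuous_on_compose2[OF cgf cont_cpx]) (simp add: cpx_S2)
  have jac: "\<bar>det (matrix (G' x))\<bar> *\<^sub>R (F (G x) *\<^sub>R (1::real^1)) = H x *\<^sub>R 1" for x
    unfolding G'_def det_complex_mult H_def F_def G_def by simp
  have "(\<lambda>y. F y *\<^sub>R (1::real^1)) absolutely_integrable_on (G ` S2)"
    unfolding GS by (rule absolutely_integrable_scaleR_right[OF integral_continuous_compact(3)[OF T2 cF]])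
  then have "integral S2 (\<lambda>x. \<bar>det (matrix (G' x))\<bar> *\<^sub>R (F (G x) *\<^sub>R (1::real^1)))
      = integral (G ` S2) (\<lambda>y. F y *\<^sub>R (1::real^1))"
    using has_absolute_integral_change_of_variables_compact[OF S2 dG injG,
        of "\<lambda>y. F y *\<^sub>R (1::real^1)" "integral (G ` S2) (\<lambda>y. F y *\<^sub>R (1::real^1))"] by blast
  then have "integral S2 (\<lambda>x. H x *\<^sub>R (1::real^1)) = integral T2 (\<lambda>y. F y *\<^sub>R (1::real^1))"
    unfolding jac GS .
  moreover have "integral S2 (\<lambda>x. H x *\<^sub>R (1::real^1)) = integral S2 H *\<^sub>R 1"
    by (intro integral_unique has_integral_scaleR_left integrable_integral integral_continuous_compact(2)[OF S2 cH])
  moreover have "integral T2 (\<lambda>x. F x *\<^sub>R (1::real^1)) = integral T2 F *\<^sub>R 1"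
    by (intro integral_unique has_integral_scaleR_left integrable_integral integral_continuous_compact(2)[OF T2 cF])
  ultimately have HF: "integral S2 H = integral T2 F" by (simp add: scaleR_cancel_right)
  have "(LINT z:(g ` S)|lborel. f z) = (LINT x:T2|lborel. F x)"
    unfolding F_def T2_def by (rule set_integral_as_vec[OF compact_continuous_image[OF cg S] cf])
  also have "\<dots> = integral S2 H" using HF integral_continuous_compact(1)[OF T2 cF] by simp
  also have "\<dots> = (LINT x:S2|lborel. H x)" by (rule integral_continuous_compact(1)[OF S2 cH, symmetric])
  also have "\<dots> = (LINT x:S|lborel. (cmod (g' x))\<^sup>2 * f (g x))"
    unfolding H_def S2_def by (rule set_integral_as_vec[OF S cgf, symmetric])
  finally show ?thesis .
qed

section \<open>Hyperbolic integrals and the reformulated distances\<close>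

lemma hyp_density_nonneg: "hyp_density z \<ge> 0"
  by (simp add: hyp_density_def)

lemma continuous_on_hyp_density: "continuous_on (ball 0 1) hyp_density"
proof -
  have "(1 - (cmod z)\<^sup>2)\<^sup>2 \<noteq> 0" if "z \<in> ball 0 1" for z :: complex
    using that abs_square_less_1[of "cmod z"] by simp
  then show ?thesis unfolding hyp_density_def[abs_def] by (intro continuous_intros) auto
qed

lemma cball_tanh_subset_ball: "cball (0::complex) (tanh R) \<subseteq> ball 0 1"
  using tanh_real_lt_1[of R] by auto

lemma continuous_on_hyp_density_cball: "continuous_on (cball 0 (tanh R)) hyp_density"
  by (rule continuous_on_subset[OF continuous_on_hyp_density cball_tanh_subset_ball])

lemma hyp_integral_mob:
  assumes a: "cmod a < 1" and h: "continuous_on (ball 0 1) h"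
  shows "(LINT z:hyp_disk (mob a t 0) R|lborel. hyp_density z * h z)
       = integral (cball 0 (tanh R)) (\<lambda>u. hyp_density u * h (mob a t u))"
proof -
  define K where "K = cball (0::complex) (tanh R)"
  have K: "compact K" "K \<subseteq> ball 0 1" unfolding K_def using cball_tanh_subset_ball by auto
  have img: "mob a t ` K \<subseteq> ball 0 1" using K(2) mob_maps_ball[OF a] by blast
  have cf: "continuous_on (ball 0 1) (\<lambda>z. hyp_density z * h z)"
    by (intro continuous_intros continuous_on_hyp_density h)
  have "(LINT z:hyp_disk (mob a t 0) R|lborel. hyp_density z * h z)
      = (LINT u:K|lborel. (cmod (mob_deriv a t u))\<^sup>2 * (hyp_density (mob a t u) * h (mob a t u)))"
    unfolding hyp_disk_mob[OF a] K_def[symmetric]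
  proof (rule change_of_variables_holomorphic[OF K(1)])
    show "(mob a t has_field_derivative mob_deriv a t u) (at u)" if "u \<in> K" for u
      using that K(2) mob_denom_nonzero[OF a, of u] by (intro has_field_derivative_mob) auto
    show "inj_on (mob a t) K" using inj_on_mob[OF a] K(2) by (rule inj_on_subset)
    show "continuous_on (mob a t ` K) (\<lambda>z. hyp_density z * h z)" using cf img by (rule continuous_on_subset)
    show "continuous_on K (mob_deriv a t)"
      unfolding K_def by (rule continuous_on_mob_deriv[OF a tanh_real_lt_1])
  qed
  also have "\<dots> = (LINT u:K|lborel. hyp_density u * h (mob a t u))"
  proof (rule set_lebesgue_integral_cong)
    show "K \<in> sets lborel" unfolding K_def by simp
    show "\<forall>u. u \<in> K \<longrightarrow> (cmod (mob_deriv a t u))\<^sup>2 * (hyp_density (mob a t u) * h (mob a t u))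
        = hyp_density u * h (mob a t u)"
      using K(2) hyp_density_mob[OF a] by (auto simp: ac_simps)
  qed
  also have "\<dots> = integral K (\<lambda>u. hyp_density u * h (mob a t u))"
  proof (rule integral_continuous_compact(1)[OF K(1)])
    have "continuous_on K (mob a t)" using continuous_on_mob[OF a] K(2) by (rule continuous_on_subset)
    then have "continuous_on K (\<lambda>u. h (mob a t u))"
      by (rule continuous_on_compose2[OF continuous_on_subset[OF h img]]) simp
    then show "continuous_on K (\<lambda>u. hyp_density u * h (mob a t u))"
      using continuous_on_subset[OF continuous_on_hyp_density K(2)] by (intro continuous_intros)
  qed
  finally show ?thesis unfolding K_def .
qed

text \<open>An automorphism carrying \<open>m\<^sub>1 0\<close> to \<open>m\<^sub>2 0\<close> is, in the coordinates given by \<open>m\<^sub>1\<close> and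
  \<open>m\<^sub>2\<close>, a rotation: the stabiliser of the origin consists of rotations.\<close>
lemma mob_transport_is_rotation:
  assumes a1: "cmod a1 < 1" and a2: "cmod a2 < 1" and b: "cmod b < 1"
    and m: "mob b s (mob a1 t1 0) = mob a2 t2 0"
  shows "\<exists>\<theta>. \<forall>u. cmod u < 1 \<longrightarrow> mob b s (mob a1 t1 u) = mob a2 t2 (cis \<theta> * u)"
proof -
  define w where "w = mob a2 t2 0"
  have w: "cmod w < 1" unfolding w_def by (rule mob_0_in_ball[OF a2])
  obtain c1 s1 where c1: "cmod c1 < 1" and e1: "\<forall>z. cmod z < 1 \<longrightarrow> mob b s (mob a1 t1 z) = mob c1 s1 z"
    using mob_compose[OF b a1] by blast
  obtain c2 s2 where e2: "\<forall>z. cmod z < 1 \<longrightarrow> mob w (- t2) (mob c1 s1 z) = mob c2 s2 z"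
    using mob_compose[OF w c1] by blast
  have "mob c2 s2 0 = mob w (- t2) (mob a2 t2 0)"
    using e1[rule_format, of 0] e2[rule_format, of 0] m by simp
  also have "\<dots> = 0" unfolding w_def by (rule mob_left_inverse[OF a2]) simp
  finally have "c2 = 0" by (simp add: mob_0)
  have "mob b s (mob a1 t1 u) = mob a2 t2 (cis s2 * u)" if u: "cmod u < 1" for u
  proof -
    have "mob b s (mob a1 t1 u) = mob a2 t2 (mob w (- t2) (mob b s (mob a1 t1 u)))"
      unfolding w_def by (rule mob_right_inverse[OF a2 mob_in_ball[OF b mob_in_ball[OF a1 u]], symmetric])
    also have "mob w (- t2) (mob b s (mob a1 t1 u)) = cis s2 * u"
      using e1 e2 u \<open>c2 = 0\<close> by (simp add: mob_rotation)
    finally show ?thesis .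
  qed
  then show ?thesis by blast
qed

lemma mob_rotation_realised:
  assumes a1: "cmod a1 < 1" and a2: "cmod a2 < 1"
  shows "\<exists>c s. cmod c < 1 \<and> (\<forall>u. cmod u < 1 \<longrightarrow> mob c s (mob a1 t1 u) = mob a2 t2 (cis \<theta> * u))"
proof -
  define z0 where "z0 = mob a1 t1 0"
  have z0: "cmod z0 < 1" unfolding z0_def by (rule mob_0_in_ball[OF a1])
  obtain c3 s3 where c3: "cmod c3 < 1" and e3: "\<forall>z. cmod z < 1 \<longrightarrow> mob 0 \<theta> (mob z0 (- t1) z) = mob c3 s3 z"
    using mob_compose[of 0 z0] z0 by fastforce
  obtain c s where c: "cmod c < 1" and e4: "\<forall>z. cmod z < 1 \<longrightarrow> mob a2 t2 (mob c3 s3 z) = mob c s z"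
    using mob_compose[OF a2 c3] by blast
  have "mob c s (mob a1 t1 u) = mob a2 t2 (cis \<theta> * u)" if u: "cmod u < 1" for u
  proof -
    have "mob c s (mob a1 t1 u) = mob a2 t2 (mob 0 \<theta> (mob z0 (- t1) (mob a1 t1 u)))"
      using e3 e4 mob_in_ball[OF a1 u] by simp
    then show ?thesis unfolding z0_def mob_left_inverse[OF a1 u] mob_rotation .
  qed
  then show ?thesis using c by blast
qed

definition rotated_mismatch :: "(complex \<Rightarrow> real) \<Rightarrow> (complex \<Rightarrow> real) \<Rightarrow> real \<Rightarrow> complex \<Rightarrow> real" where
  "rotated_mismatch f g \<theta> u = \<bar>f u - g (cis \<theta> * u)\<bar>"

definition hyp_mismatch :: "real \<Rightarrow> (complex \<Rightarrow> real) \<Rightarrow> (complex \<Rightarrow> real) \<Rightarrow> real \<Rightarrow> real" where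
  "hyp_mismatch R f g \<theta> = integral (cball 0 (tanh R)) (\<lambda>u. hyp_density u * rotated_mismatch f g \<theta> u)"

definition quad_mismatch :: "real \<Rightarrow> complex set \<Rightarrow> (complex \<Rightarrow> real) \<Rightarrow> (complex \<Rightarrow> real) \<Rightarrow> real \<Rightarrow> real" where
  "quad_mismatch R P f g \<theta> = (\<Sum>p\<in>P. quad_weight R P p * rotated_mismatch f g \<theta> p)"

lemma transported_cost_eq_hyp_mismatch:
  fixes \<mu> \<nu> :: "complex \<Rightarrow> real"
  assumes a1: "cmod a1 < 1" and b: "cmod b < 1"
    and \<mu>: "continuous_on (ball 0 1) \<mu>" and \<nu>: "continuous_on (ball 0 1) \<nu>"
    and \<theta>: "\<forall>u. cmod u < 1 \<longrightarrow> mob b s (mob a1 t1 u) = mob a2 t2 (cis \<theta> * u)"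
  shows "(LINT z:hyp_disk (mob a1 t1 0) R|lborel. hyp_density z * \<bar>\<mu> z - \<nu> (mob b s z)\<bar>)
       = hyp_mismatch R (\<lambda>u. \<mu> (mob a1 t1 u)) (\<lambda>u. \<nu> (mob a2 t2 u)) \<theta>"
proof -
  have "continuous_on (ball 0 1) (\<lambda>z. \<nu> (mob b s z))"
    by (rule continuous_on_compose2[OF \<nu> continuous_on_mob[OF b] mob_maps_ball[OF b]])
  then have "(LINT z:hyp_disk (mob a1 t1 0) R|lborel. hyp_density z * \<bar>\<mu> z - \<nu> (mob b s z)\<bar>)
      = integral (cball 0 (tanh R)) (\<lambda>u. hyp_density u * \<bar>\<mu> (mob a1 t1 u) - \<nu> (mob b s (mob a1 t1 u))\<bar>)"
    using \<mu> by (intro hyp_integral_mob[OF a1]) (intro continuous_intros)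
  also have "\<dots> = hyp_mismatch R (\<lambda>u. \<mu> (mob a1 t1 u)) (\<lambda>u. \<nu> (mob a2 t2 u)) \<theta>"
    unfolding hyp_mismatch_def rotated_mismatch_def
  proof (rule integral_cong)
    fix u :: complex assume "u \<in> cball 0 (tanh R)"
    then have "cmod u < 1" using tanh_real_lt_1[of R] by simp
    then show "hyp_density u * \<bar>\<mu> (mob a1 t1 u) - \<nu> (mob b s (mob a1 t1 u))\<bar>
        = hyp_density u * \<bar>\<mu> (mob a1 t1 u) - \<nu> (mob a2 t2 (cis \<theta> * u))\<bar>" using \<theta> by simp
  qed
  finally show ?thesis .
qed

lemma dR_eq_Inf_rotations:
  fixes \<mu> \<nu> :: "complex \<Rightarrow> real"
  assumes a1: "cmod a1 < 1" and a2: "cmod a2 < 1"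
    and \<mu>: "continuous_on (ball 0 1) \<mu>" and \<nu>: "continuous_on (ball 0 1) \<nu>"
  shows "dR \<mu> \<nu> R (mob a1 t1 0) (mob a2 t2 0)
       = (INF \<theta>. hyp_mismatch R (\<lambda>u. \<mu> (mob a1 t1 u)) (\<lambda>u. \<nu> (mob a2 t2 u)) \<theta>)"
proof -
  define J where "J = hyp_mismatch R (\<lambda>u. \<mu> (mob a1 t1 u)) (\<lambda>u. \<nu> (mob a2 t2 u))"
  define X where "X = (\<lambda>m. LINT z:hyp_disk (mob a1 t1 0) R|lborel. hyp_density z * \<bar>\<mu> z - \<nu> (m z)\<bar>)"
  define Ms where "Ms = {m \<in> mobius_D. m (mob a1 t1 0) = mob a2 t2 0}"
  have XJ: "X (mob b s) = J \<theta>"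
    if "cmod b < 1" "\<forall>u. cmod u < 1 \<longrightarrow> mob b s (mob a1 t1 u) = mob a2 t2 (cis \<theta> * u)"
    for b s \<theta>
    unfolding X_def J_def by (rule transported_cost_eq_hyp_mismatch[OF a1 that(1) \<mu> \<nu> that(2)])
  have "X ` Ms = range J"
  proof
    show "X ` Ms \<subseteq> range J"
    proof
      fix y assume "y \<in> X ` Ms"
      then obtain b s where b: "cmod b < 1" and y: "y = X (mob b s)"
        and "mob b s (mob a1 t1 0) = mob a2 t2 0" unfolding Ms_def mobius_D_eq by auto
      then obtain \<theta> where "\<forall>u. cmod u < 1 \<longrightarrow> mob b s (mob a1 t1 u) = mob a2 t2 (cis \<theta> * u)"
        using mob_transport_is_rotation[OF a1 a2 b] by blast
      then have "y = J \<theta>" using XJ[OF b] y by simp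
      then show "y \<in> range J" by simp
    qed
    show "range J \<subseteq> X ` Ms"
    proof
      fix y assume "y \<in> range J"
      then obtain \<theta> where y: "y = J \<theta>" by auto
      obtain c s where c: "cmod c < 1"
        and c\<theta>: "\<forall>u. cmod u < 1 \<longrightarrow> mob c s (mob a1 t1 u) = mob a2 t2 (cis \<theta> * u)"
        using mob_rotation_realised[OF a1 a2] by blast
      have "mob c s \<in> Ms" unfolding Ms_def mobius_D_eq using c c\<theta>[rule_format, of 0] by auto
      then show "y \<in> X ` Ms" using XJ[OF c c\<theta>] y by (metis image_eqI)
    qed
  qed
  then show ?thesis unfolding dR_def X_def[symmetric] Ms_def[symmetric] J_def by simp
qed

lemma dhh_eq_Min_quad_mismatch:
  assumes a1: "cmod a1 < 1" and P: "P \<subseteq> ball 0 1"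
  shows "dhh \<mu> \<nu> R P L (mob a1 t1) (mob a2 t2) = Min ((\<lambda>l. quad_mismatch R P
           (\<lambda>u. \<mu> (mob a1 t1 u)) (\<lambda>u. \<nu> (mob a2 t2 u)) (2 * pi * real l / real L)) ` {1..L})"
  unfolding dhh_def quad_mismatch_def rotated_mismatch_def
proof (intro arg_cong[where f = Min] image_cong refl sum.cong)
  fix l p assume "p \<in> P"
  then have "inv_into (ball 0 1) (mob a1 t1) (mob a1 t1 p) = p"
    using P by (intro inv_into_f_f[OF inj_on_mob[OF a1]]) auto
  moreover have "rot L l z = cis (2 * pi * real l / real L) * z" for z
    by (simp add: rot_def cis_conv_exp field_simps)
  ultimately show "quad_weight R P p * \<bar>\<mu> (mob a1 t1 p) - \<nu> ((mob a2 t2 \<circ> rot L l \<circ> inv_into (ball 0 1) (mob a1 t1)) (mob a1 t1 p))\<bar>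
      = quad_weight R P p * \<bar>\<mu> (mob a1 t1 p) - \<nu> (mob a2 t2 (cis (2 * pi * real l / real L) * p))\<bar>"
    by simp
qed

section \<open>Voronoi quadrature for the hyperbolic measure\<close>

lemma integral_diff_bound:
  fixes f g h :: "'a::euclidean_space \<Rightarrow> real"
  assumes S: "compact S" and cont: "continuous_on S f" "continuous_on S g" "continuous_on S h"
    and bound: "\<And>u. u \<in> S \<Longrightarrow> \<bar>f u - g u\<bar> \<le> h u"
  shows "\<bar>integral S f - integral S g\<bar> \<le> integral S h"
proof -
  note integrable = integral_continuous_compact(2)[OF S]
  have "norm (integral S (\<lambda>u. f u - g u)) \<le> integral S h"
    using integrable cont bound by (intro integral_norm_bound_integral integrable_diff) auto
  then show ?thesis using integral_diff[OF integrable[OF cont(1)] integrable[OF cont(2)]] by simp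
qed

lemma one_point_quadrature_error:
  fixes \<rho> \<phi> :: "'a::euclidean_space \<Rightarrow> real"
  assumes C: "compact C" and \<rho>: "continuous_on C \<rho>" and \<phi>: "continuous_on C \<phi>"
    and nonneg: "\<And>u. u \<in> C \<Longrightarrow> \<rho> u \<ge> 0" and osc: "\<And>u. u \<in> C \<Longrightarrow> \<bar>\<phi> u - \<phi> p\<bar> \<le> \<delta>"
  shows "\<bar>integral C (\<lambda>u. \<rho> u * \<phi> u) - integral C \<rho> * \<phi> p\<bar> \<le> \<delta> * integral C \<rho>"
proof -
  have "\<bar>integral C (\<lambda>u. \<rho> u * \<phi> u) - integral C (\<lambda>u. \<rho> u * \<phi> p)\<bar> \<le> integral C (\<lambda>u. \<rho> u * \<delta>)"
  proof (rule integral_diff_bound[OF C])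
    show "continuous_on C (\<lambda>u. \<rho> u * \<phi> u)" "continuous_on C (\<lambda>u. \<rho> u * \<phi> p)"
      "continuous_on C (\<lambda>u. \<rho> u * \<delta>)"
      using \<rho> \<phi> by (auto intro!: continuous_intros)
    fix u assume "u \<in> C"
    then show "\<bar>\<rho> u * \<phi> u - \<rho> u * \<phi> p\<bar> \<le> \<rho> u * \<delta>"
      using nonneg osc by (simp add: abs_mult right_diff_distrib[symmetric] mult_left_mono)
  qed
  then show ?thesis by (simp add: integral_mult_left mult.commute)
qed

lemma closed_voronoi: "closed (voronoi P p)"
proof -
  have "voronoi P p = (\<Inter>q\<in>P. {z. cmod (z - p) \<le> cmod (z - q)})" unfolding voronoi_def by auto
  moreover have "closed {z. cmod (z - p) \<le> cmod (z - q)}" for q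
    by (intro closed_Collect_le continuous_intros)
  ultimately show ?thesis by (simp add: closed_INT)
qed

text \<open>Two distinct Voronoi cells meet only in a subset of a line.\<close>
lemma negligible_voronoi_overlap:
  assumes "p \<noteq> q" "p \<in> P" "q \<in> P"
  shows "negligible (voronoi P p \<inter> voronoi P q)"
proof -
  have sq: "(cmod (z - p))\<^sup>2 = (cmod z)\<^sup>2 - 2 * (p \<bullet> z) + (cmod p)\<^sup>2" for z p :: complex
    by (simp add: power2_norm_eq_inner inner_diff_left inner_diff_right inner_commute algebra_simps)
  have "voronoi P p \<inter> voronoi P q \<subseteq> {z. (2 *\<^sub>R (q - p)) \<bullet> z = (cmod q)\<^sup>2 - (cmod p)\<^sup>2}"
  proof
    fix z assume "z \<in> voronoi P p \<inter> voronoi P q"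
    then have "cmod (z - p) = cmod (z - q)" using assms unfolding voronoi_def by (auto intro: order_antisym)
    then have "(cmod (z - p))\<^sup>2 = (cmod (z - q))\<^sup>2" by simp
    then show "z \<in> {z. (2 *\<^sub>R (q - p)) \<bullet> z = (cmod q)\<^sup>2 - (cmod p)\<^sup>2}"
      unfolding sq by (simp add: inner_diff_left algebra_simps)
  qed
  moreover have "negligible {z. (2 *\<^sub>R (q - p)) \<bullet> z = (cmod q)\<^sup>2 - (cmod p)\<^sup>2}"
    using assms by (intro negligible_hyperplane) simp
  ultimately show ?thesis using negligible_subset by blast
qed

lemma voronoi_cover:
  assumes "finite P" "P \<noteq> {}" shows "\<exists>p\<in>P. z \<in> voronoi P p"
proof -
  have "Min ((\<lambda>q. cmod (z - q)) ` P) \<in> (\<lambda>q. cmod (z - q)) ` P" using assms by (intro Min_in) auto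
  then obtain p where p: "p \<in> P" and min: "cmod (z - p) = Min ((\<lambda>q. cmod (z - q)) ` P)" by auto
  have "\<forall>q\<in>P. cmod (z - p) \<le> cmod (z - q)" unfolding min using assms(1) by simp
  then show ?thesis using p unfolding voronoi_def by blast
qed

lemma dist_le_fill_dist:
  assumes p: "p \<in> P" and u: "u \<in> hyp_disk 0 R" "u \<in> voronoi P p"
  shows "cmod (u - p) \<le> fill_dist R P"
proof -
  have bdd: "bdd_below ((\<lambda>q. cmod (z - q)) ` P)" for z by (rule bdd_belowI[of _ 0]) auto
  have "cmod (u - p) = (INF q\<in>P. cmod (u - q))"
  proof (rule antisym)
    show "cmod (u - p) \<le> (INF q\<in>P. cmod (u - q))"
      using p u(2) by (intro cINF_greatest) (auto simp: voronoi_def)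
  qed (rule cINF_lower[OF bdd p])
  also have "\<dots> \<le> fill_dist R P" unfolding fill_dist_def
  proof (rule cSUP_upper[OF u(1)], rule bdd_aboveI[of _ "1 + cmod p"], clarify)
    fix z assume "z \<in> hyp_disk 0 R"
    then have "cmod z < 1" by (simp add: hyp_disk_def)
    moreover have "(INF q\<in>P. cmod (z - q)) \<le> cmod (z - p)" by (rule cINF_lower[OF bdd p])
    ultimately show "(INF q\<in>P. cmod (z - q)) \<le> 1 + cmod p" using norm_triangle_ineq4[of z p] by simp
  qed
  finally show ?thesis .
qed

lemma integral_voronoi_split:
  fixes f :: "complex \<Rightarrow> real"
  assumes S: "compact S" and P: "finite P" "P \<noteq> {}" "P \<subseteq> S" and f: "continuous_on S f"
  shows "integral S f = (\<Sum>p\<in>P. integral (S \<inter> voronoi P p) f)"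
proof -
  define cell where "cell = (\<lambda>p. S \<inter> voronoi P p)"
  have cell_compact: "compact (cell p)" for p
    unfolding cell_def using S by (intro compact_Int_closed closed_voronoi)
  have inj: "inj_on cell P"
  proof (rule inj_onI)
    fix p q assume pq: "p \<in> P" "q \<in> P" "cell p = cell q"
    then have "p \<in> cell q" using P(3) unfolding cell_def voronoi_def by auto
    then have "cmod (p - q) \<le> cmod (p - p)" using pq(1) unfolding cell_def voronoi_def by blast
    then show "p = q" by simp
  qed
  have union: "\<Union> (cell ` P) = S"
  proof
    show "S \<subseteq> \<Union> (cell ` P)"
    proof
      fix z assume "z \<in> S"
      moreover obtain p where "p \<in> P" "z \<in> voronoi P p" using voronoi_cover[OF P(1,2)] by blast
      ultimately show "z \<in> \<Union> (cell ` P)" unfolding cell_def by blast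
    qed
  qed (auto simp: cell_def)
  have disjoint: "pairwise (\<lambda>A B. negligible (A \<inter> B)) (cell ` P)"
  proof (rule pairwiseI, clarify)
    fix p q assume "p \<in> P" "q \<in> P" "cell p \<noteq> cell q"
    then have "negligible (voronoi P p \<inter> voronoi P q)" by (intro negligible_voronoi_overlap) auto
    moreover have "cell p \<inter> cell q \<subseteq> voronoi P p \<inter> voronoi P q" unfolding cell_def by blast
    ultimately show "negligible (cell p \<inter> cell q)" by (rule negligible_subset)
  qed
  have pieces: "(f has_integral integral A f) A" if A: "A \<in> cell ` P" for A
  proof -
    obtain p where A: "A = cell p" using A by blast
    have "continuous_on (cell p) f" using f by (rule continuous_on_subset) (simp add: cell_def)
    then show ?thesis unfolding A by (intro integrable_integral integral_continuous_compact(2)[OF cell_compact])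
  qed
  have "(f has_integral (\<Sum>A\<in>cell ` P. integral A f)) S"
    using has_integral_Union[OF finite_imageI[OF P(1)] pieces disjoint] unfolding union .
  then have "integral S f = (\<Sum>A\<in>cell ` P. integral A f)" by (rule integral_unique)
  also have "\<dots> = (\<Sum>p\<in>P. integral (cell p) f)" by (rule sum.reindex[OF inj, unfolded o_def])
  finally show ?thesis unfolding cell_def .
qed

lemma voronoi_quadrature_error:
  fixes \<phi> :: "complex \<Rightarrow> real"
  assumes P: "finite P" "P \<noteq> {}" "P \<subseteq> cball 0 (tanh R)"
    and lip: "\<Lambda>-lipschitz_on (cball 0 (tanh R)) \<phi>"
  shows "\<bar>integral (cball 0 (tanh R)) (\<lambda>u. hyp_density u * \<phi> u) - (\<Sum>p\<in>P. quad_weight R P p * \<phi> p)\<bar>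
          \<le> \<Lambda> * fill_dist R P * integral (cball 0 (tanh R)) hyp_density"
proof -
  define K where "K = cball (0::complex) (tanh R)"
  define cell where "cell = (\<lambda>p. K \<inter> voronoi P p)"
  define \<delta> where "\<delta> = \<Lambda> * fill_dist R P"
  have K: "compact K" unfolding K_def by simp
  have cell: "compact (cell p)" "cell p \<subseteq> K" for p
    unfolding cell_def using K by (auto intro: compact_Int_closed closed_voronoi)
  have dens: "continuous_on K hyp_density" unfolding K_def by (rule continuous_on_hyp_density_cball)
  have \<phi>: "continuous_on K \<phi>" using lip unfolding K_def by (rule lipschitz_on_continuous_on)
  have dens_cell: "continuous_on (cell p) hyp_density" for p using dens cell(2) by (rule continuous_on_subset)
  have weight: "quad_weight R P p = integral (cell p) hyp_density" for p
    using integral_continuous_compact(1)[OF cell(1) dens_cell]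
    unfolding quad_weight_def hyp_disk_0 K_def[symmetric] cell_def .
  have each: "\<bar>integral (cell p) (\<lambda>u. hyp_density u * \<phi> u) - quad_weight R P p * \<phi> p\<bar>
      \<le> \<delta> * integral (cell p) hyp_density" if p: "p \<in> P" for p
    unfolding weight
  proof (rule one_point_quadrature_error[OF cell(1) dens_cell continuous_on_subset[OF \<phi> cell(2)]])
    fix u assume u: "u \<in> cell p"
    show "hyp_density u \<ge> 0" by (rule hyp_density_nonneg)
    have "u \<in> cball 0 (tanh R)" "p \<in> cball 0 (tanh R)"
      using u p P(3) cell(2)[of p] unfolding K_def by auto
    then have "\<bar>\<phi> u - \<phi> p\<bar> \<le> \<Lambda> * cmod (u - p)" using lipschitz_on_normD[OF lip] by simp
    also have "\<dots> \<le> \<delta>" unfolding \<delta>_def using lipschitz_on_nonneg[OF lip] u p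
      by (intro mult_left_mono dist_le_fill_dist) (auto simp: cell_def K_def hyp_disk_0)
    finally show "\<bar>\<phi> u - \<phi> p\<bar> \<le> \<delta>" .
  qed
  have "\<bar>integral K (\<lambda>u. hyp_density u * \<phi> u) - (\<Sum>p\<in>P. quad_weight R P p * \<phi> p)\<bar>
      = \<bar>\<Sum>p\<in>P. integral (cell p) (\<lambda>u. hyp_density u * \<phi> u) - quad_weight R P p * \<phi> p\<bar>"
    using integral_voronoi_split[OF K P[folded K_def] continuous_on_mult[OF dens \<phi>]]
    unfolding cell_def sum_subtractf by simp
  also have "\<dots> \<le> (\<Sum>p\<in>P. \<delta> * integral (cell p) hyp_density)"
    using each by (intro order.trans[OF sum_abs] sum_mono) auto
  also have "\<dots> = \<delta> * integral K hyp_density"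
    using integral_voronoi_split[OF K P[folded K_def] dens]
    unfolding cell_def by (simp add: sum_distrib_left)
  finally show ?thesis unfolding K_def \<delta>_def .
qed

section \<open>Grid of rotation angles\<close>

lemma norm_cis_diff_le: "cmod (cis x - cis y) \<le> \<bar>x - y\<bar>"
proof -
  have "cis x - cis y = cis y * (cis (x - y) - 1)"
    by (simp add: right_diff_distrib cis_mult)
  then have "cmod (cis x - cis y) = cmod (exp (\<i> * complex_of_real (x - y)) - 1)"
    by (simp add: norm_mult cis_conv_exp)
  also have "\<dots> = 2 * \<bar>sin ((x - y) / 2)\<bar>" by (rule dist_exp_i_1)
  also have "\<dots> \<le> \<bar>x - y\<bar>" using abs_sin_x_le_abs_x[of "(x - y) / 2"] by simp
  finally show ?thesis .
qed

lemma angle_grid: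
  assumes L: "L \<ge> (1::nat)"
  shows "\<exists>l\<in>{1..L}. cmod (cis \<theta> - cis (2 * pi * real l / real L)) \<le> 2 * pi / real L"
proof -
  have L0: "real L > 0" using L by simp
  define x where "x = \<theta> * real L / (2 * pi)"
  define k where "k = \<lceil>x\<rceil>"
  have k: "x \<le> real_of_int k" "real_of_int k < x + 1" unfolding k_def by linarith+
  define l where "l = (if k mod int L = 0 then L else nat (k mod int L))"
  have m: "0 \<le> k mod int L" "k mod int L < int L" using L by auto
  have l: "l \<in> {1..L}"
  proof (cases "k mod int L = 0")
    case False
    then have "1 \<le> k mod int L" using m by linarith
    then show ?thesis using m False unfolding l_def by (simp add: nat_le_iff le_nat_iff)
  qed (use L l_def in auto)
  have "int L dvd (k - int l)"
    using L unfolding l_def by (auto simp: mod_eq_0_iff_dvd minus_mod_eq_mult_div[symmetric])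
  then obtain n where n: "k - int l = int L * n" by (elim dvdE)
  have "cis (2 * pi * real_of_int k / real L) = cis (2 * pi * real l / real L + 2 * pi * real_of_int n)"
  proof -
    have "k = int l + int L * n" using n by simp
    then have "real_of_int k = real l + real L * real_of_int n" by simp
    then show ?thesis using L0 by (simp add: field_simps)
  qed
  also have "\<dots> = cis (2 * pi * real l / real L)"
    by (simp add: cis_mult[symmetric])
  finally have grid: "cis (2 * pi * real_of_int k / real L) = cis (2 * pi * real l / real L)" .
  have "cmod (cis \<theta> - cis (2 * pi * real l / real L)) \<le> \<bar>\<theta> - 2 * pi * real_of_int k / real L\<bar>"
    unfolding grid[symmetric] by (rule norm_cis_diff_le)
  also have "\<dots> = 2 * pi / real L * \<bar>x - real_of_int k\<bar>"
    unfolding x_def using L0 by (simp add: field_simps abs_mult_pos flip: abs_mult)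
  also have "\<dots> \<le> 2 * pi / real L * 1" using k L0 by (intro mult_left_mono) auto
  finally show ?thesis using l by auto
qed

section \<open>Approximating the infimum over rotations\<close>

lemma lipschitz_on_rotated_mismatch:
  fixes f g :: "complex \<Rightarrow> real"
  assumes f: "Lf-lipschitz_on (cball 0 r) f" and g: "Lg-lipschitz_on (cball 0 r) g"
  shows "(Lf + Lg)-lipschitz_on (cball 0 r) (rotated_mismatch f g \<theta>)"
proof (rule lipschitz_onI)
  show "0 \<le> Lf + Lg" using lipschitz_on_nonneg[OF f] lipschitz_on_nonneg[OF g] by simp
  fix u v :: complex assume u: "u \<in> cball 0 r" and v: "v \<in> cball 0 r"
  then have rot: "cis \<theta> * u \<in> cball 0 r" "cis \<theta> * v \<in> cball 0 r" by (simp_all add: norm_mult)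
  have "dist (rotated_mismatch f g \<theta> u) (rotated_mismatch f g \<theta> v)
      \<le> \<bar>f u - f v\<bar> + \<bar>g (cis \<theta> * u) - g (cis \<theta> * v)\<bar>"
    unfolding rotated_mismatch_def dist_real_def by linarith
  also have "\<dots> \<le> Lf * cmod (u - v) + Lg * cmod (cis \<theta> * u - cis \<theta> * v)"
    using lipschitz_on_normD[OF f u v] lipschitz_on_normD[OF g rot] by simp
  also have "cmod (cis \<theta> * u - cis \<theta> * v) = cmod (u - v)"
    by (simp add: right_diff_distrib[symmetric] norm_mult)
  finally show "dist (rotated_mismatch f g \<theta> u) (rotated_mismatch f g \<theta> v) \<le> (Lf + Lg) * dist u v"
    by (simp add: dist_norm algebra_simps)
qed

lemma hyp_area_nonneg: "integral (cball 0 (tanh R)) hyp_density \<ge> 0"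
  by (rule integral_nonneg[OF integral_continuous_compact(2)[OF compact_cball continuous_on_hyp_density_cball]
        hyp_density_nonneg])

lemma hyp_mismatch_nonneg:
  assumes f: "Lf-lipschitz_on (cball 0 (tanh R)) f" and g: "Lg-lipschitz_on (cball 0 (tanh R)) g"
  shows "hyp_mismatch R f g \<theta> \<ge> 0"
proof -
  have "continuous_on (cball 0 (tanh R)) (rotated_mismatch f g \<theta>)"
    by (rule lipschitz_on_continuous_on[OF lipschitz_on_rotated_mismatch[OF f g]])
  then show ?thesis unfolding hyp_mismatch_def
    by (intro integral_nonneg integral_continuous_compact(2)[OF compact_cball]
          continuous_on_mult continuous_on_hyp_density_cball)
      (simp_all add: rotated_mismatch_def hyp_density_nonneg)
qed

lemma hyp_mismatch_quadrature:
  assumes f: "Lf-lipschitz_on (cball 0 (tanh R)) f" and g: "Lg-lipschitz_on (cball 0 (tanh R)) g"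
    and P: "finite P" "P \<noteq> {}" "P \<subseteq> cball 0 (tanh R)"
  shows "\<bar>hyp_mismatch R f g \<theta> - quad_mismatch R P f g \<theta>\<bar>
           \<le> (Lf + Lg) * fill_dist R P * integral (cball 0 (tanh R)) hyp_density"
  unfolding hyp_mismatch_def quad_mismatch_def
  by (rule voronoi_quadrature_error[OF P lipschitz_on_rotated_mismatch[OF f g]])

lemma hyp_mismatch_rotation_stability:
  assumes f: "Lf-lipschitz_on (cball 0 (tanh R)) f" and g: "Lg-lipschitz_on (cball 0 (tanh R)) g"
  shows "\<bar>hyp_mismatch R f g \<theta> - hyp_mismatch R f g \<theta>'\<bar>
           \<le> Lg * cmod (cis \<theta> - cis \<theta>') * integral (cball 0 (tanh R)) hyp_density"
proof -
  define K where "K = cball (0::complex) (tanh R)"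
  define c where "c = Lg * cmod (cis \<theta> - cis \<theta>')"
  have K: "compact K" unfolding K_def by simp
  have dens: "continuous_on K hyp_density" unfolding K_def by (rule continuous_on_hyp_density_cball)
  have mismatch: "continuous_on K (rotated_mismatch f g \<phi>)" for \<phi>
    using lipschitz_on_rotated_mismatch[OF f g] unfolding K_def by (rule lipschitz_on_continuous_on)
  have "\<bar>hyp_mismatch R f g \<theta> - hyp_mismatch R f g \<theta>'\<bar> \<le> integral K (\<lambda>u. hyp_density u * c)"
    unfolding hyp_mismatch_def K_def[symmetric]
  proof (rule integral_diff_bound[OF K])
    show "continuous_on K (\<lambda>u. hyp_density u * rotated_mismatch f g \<theta> u)"
      "continuous_on K (\<lambda>u. hyp_density u * rotated_mismatch f g \<theta>' u)"
      "continuous_on K (\<lambda>u. hyp_density u * c)"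
      using dens mismatch by (auto intro!: continuous_intros)
    fix u assume u: "u \<in> K"
    then have rot: "cis \<theta> * u \<in> K" "cis \<theta>' * u \<in> K" "cmod u \<le> 1"
      using tanh_real_lt_1[of R] unfolding K_def by (auto simp: norm_mult)
    have "\<bar>rotated_mismatch f g \<theta> u - rotated_mismatch f g \<theta>' u\<bar> \<le> \<bar>g (cis \<theta> * u) - g (cis \<theta>' * u)\<bar>"
      unfolding rotated_mismatch_def by linarith
    also have "\<dots> \<le> Lg * cmod (cis \<theta> * u - cis \<theta>' * u)"
      using lipschitz_on_normD[OF g] rot unfolding K_def by simp
    also have "\<dots> \<le> c"
    proof -
      have "cmod (cis \<theta> - cis \<theta>') * cmod u \<le> cmod (cis \<theta> - cis \<theta>')" using rot(3) by (simp add: mult_left_le)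
      then show ?thesis unfolding c_def left_diff_distrib[symmetric] norm_mult
        using lipschitz_on_nonneg[OF g] by (rule mult_left_mono)
    qed
    finally show "\<bar>hyp_density u * rotated_mismatch f g \<theta> u - hyp_density u * rotated_mismatch f g \<theta>' u\<bar>
        \<le> hyp_density u * c"
      using hyp_density_nonneg[of u] by (simp add: abs_mult right_diff_distrib[symmetric] mult_left_mono)
  qed
  also have "\<dots> = c * integral K hyp_density" by (simp add: integral_mult_left mult.commute)
  finally show ?thesis unfolding c_def K_def .
qed

theorem rotation_discretisation:
  fixes f g :: "complex \<Rightarrow> real"
  assumes f: "Lf-lipschitz_on (cball 0 (tanh R)) f" and g: "Lg-lipschitz_on (cball 0 (tanh R)) g"
    and P: "finite P" "P \<noteq> {}" "P \<subseteq> cball 0 (tanh R)" and L: "L \<ge> 1"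
  defines "A \<equiv> integral (cball 0 (tanh R)) hyp_density"
  shows "\<bar>(INF \<theta>. hyp_mismatch R f g \<theta>)
            - Min ((\<lambda>l. quad_mismatch R P f g (2 * pi * real l / real L)) ` {1..L})\<bar>
           \<le> (Lf + Lg) * A * fill_dist R P + Lg * (2 * pi) * A / real L"
proof -
  define J where "J = hyp_mismatch R f g"
  define S where "S = (\<lambda>l. quad_mismatch R P f g (2 * pi * real l / real L))"
  define \<epsilon> where "\<epsilon> = (Lf + Lg) * A * fill_dist R P"
  have A: "A \<ge> 0" unfolding A_def by (rule hyp_area_nonneg)
  have Lg: "Lg \<ge> 0" using lipschitz_on_nonneg[OF g] .
  have quad: "\<bar>J \<theta> - quad_mismatch R P f g \<theta>\<bar> \<le> \<epsilon>" for \<theta>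
    using hyp_mismatch_quadrature[OF f g P] unfolding J_def \<epsilon>_def A_def by (simp add: ac_simps)
  have bdd: "bdd_below (range J)"
    unfolding J_def using hyp_mismatch_nonneg[OF f g] by (intro bdd_belowI[of _ 0]) auto
  have fin: "finite (S ` {1..L})" and ne: "S ` {1..L} \<noteq> {}" using L by auto
  obtain l0 where l0: "l0 \<in> {1..L}" "Min (S ` {1..L}) = S l0" using Min_in[OF fin ne] by auto
  have "Min (S ` {1..L}) = quad_mismatch R P f g (2 * pi * real l0 / real L)"
    using l0(2) unfolding S_def by simp
  then have upper: "Inf (range J) - Min (S ` {1..L}) \<le> \<epsilon>"
    using cInf_lower[OF rangeI bdd, of "2 * pi * real l0 / real L"] quad[of "2 * pi * real l0 / real L"]
    by linarith
  have "Min (S ` {1..L}) - \<epsilon> - Lg * (2 * pi) * A / real L \<le> J \<theta>" for \<theta>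
  proof -
    obtain l where l: "l \<in> {1..L}"
      and close: "cmod (cis \<theta> - cis (2 * pi * real l / real L)) \<le> 2 * pi / real L"
      using angle_grid[OF L] by blast
    have "Lg * cmod (cis \<theta> - cis (2 * pi * real l / real L)) * A \<le> Lg * (2 * pi / real L) * A"
      using close Lg A by (intro mult_right_mono mult_left_mono) auto
    then have "J (2 * pi * real l / real L) \<le> J \<theta> + Lg * (2 * pi) * A / real L"
      using hyp_mismatch_rotation_stability[OF f g, of \<theta> "2 * pi * real l / real L"]
      unfolding J_def A_def[symmetric] by simp
    moreover have "Min (S ` {1..L}) \<le> S l" using fin l by simp
    ultimately show ?thesis using quad[of "2 * pi * real l / real L"] unfolding S_def by linarith
  qed
  then have "Min (S ` {1..L}) - \<epsilon> - Lg * (2 * pi) * A / real L \<le> Inf (range J)"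
    by (intro cInf_greatest) auto
  then have lower: "Min (S ` {1..L}) - Inf (range J) \<le> \<epsilon> + Lg * (2 * pi) * A / real L"
    by linarith
  have "0 \<le> Lg * (2 * pi) * A / real L" using Lg A by simp
  then show ?thesis using upper lower unfolding J_def[symmetric] S_def[symmetric] \<epsilon>_def by linarith
qed

lemma lipschitz_on_pullback:
  fixes f :: "complex \<Rightarrow> real"
  assumes f: "K-lipschitz_on (ball 0 1) f" and a: "cmod a < 1"
  shows "(K * (2 / (1 - tanh R)))-lipschitz_on (cball 0 (tanh R)) (\<lambda>u. f (mob a t u))"
proof (rule lipschitz_on_compose2[where f = "mob a t" and g = f])
  show "(2 / (1 - tanh R))-lipschitz_on (cball 0 (tanh R)) (mob a t)"
    by (rule lipschitz_on_mob[OF a tanh_real_lt_1])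
  show "K-lipschitz_on (mob a t ` cball 0 (tanh R)) f"
    using f by (rule lipschitz_on_subset) (use mob_maps_ball[OF a] cball_tanh_subset_ball in blast)
qed

text \<open>The theorem, with \<open>C1 = (K\<^sub>\<mu> + K\<^sub>\<nu>) \<Lambda> A\<close> and \<open>C2 = 2\<pi> K\<^sub>\<nu> \<Lambda> A\<close>, where \<open>K\<^sub>\<mu>, K\<^sub>\<nu>\<close> are
  Lipschitz constants, \<open>\<Lambda> = 2 / (1 - tanh R)\<close> bounds the Lipschitz constants of automorphisms on the
  disk, and \<open>A\<close> is its hyperbolic area.\<close>
theorem mainTheorem4:
  fixes \<mu> \<nu> :: "complex \<Rightarrow> real" and R :: real
  assumes "\<exists>K. K-lipschitz_on (ball 0 1) \<mu>"
    and "\<exists>K. K-lipschitz_on (ball 0 1) \<nu>"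
    and "R > 0"
  shows "\<exists>C1 C2. \<forall>(L::nat) zi wj mi mj P.
           L \<ge> 1 \<and> zi \<in> ball 0 1 \<and> wj \<in> ball 0 1 \<and>
           mi \<in> mobius_D \<and> mj \<in> mobius_D \<and> mi 0 = zi \<and> mj 0 = wj \<and>
           finite P \<and> P \<noteq> {} \<and> P \<subseteq> hyp_disk 0 R \<longrightarrow>
           \<bar>dR \<mu> \<nu> R zi wj - dhh \<mu> \<nu> R P L mi mj\<bar>
             \<le> C1 * fill_dist R P + C2 / real L"
proof -
  obtain K\<mu> K\<nu> where \<mu>: "K\<mu>-lipschitz_on (ball 0 1) \<mu>" and \<nu>: "K\<nu>-lipschitz_on (ball 0 1) \<nu>"
    using assms(1,2) by blast
  define Lm where "Lm = 2 / (1 - tanh R)"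
  define A where "A = integral (cball 0 (tanh R)) hyp_density"
  show ?thesis
  proof (intro exI allI impI)
    fix L :: nat and zi wj mi mj P
    assume H: "L \<ge> 1 \<and> zi \<in> ball 0 1 \<and> wj \<in> ball 0 1 \<and> mi \<in> mobius_D \<and> mj \<in> mobius_D \<and>
      mi 0 = zi \<and> mj 0 = wj \<and> finite P \<and> P \<noteq> {} \<and> P \<subseteq> hyp_disk 0 R"
    then obtain a1 t1 a2 t2 where a: "cmod a1 < 1" "cmod a2 < 1" and m: "mi = mob a1 t1" "mj = mob a2 t2"
      unfolding mobius_D_eq by blast
    have P: "finite P" "P \<noteq> {}" "P \<subseteq> cball 0 (tanh R)" using H by (simp_all add: hyp_disk_0)
    have "dR \<mu> \<nu> R zi wj = (INF \<theta>. hyp_mismatch R (\<lambda>u. \<mu> (mob a1 t1 u)) (\<lambda>u. \<nu> (mob a2 t2 u)) \<theta>)"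
      using H m dR_eq_Inf_rotations[OF a lipschitz_on_continuous_on[OF \<mu>] lipschitz_on_continuous_on[OF \<nu>]]
      by blast
    moreover have "dhh \<mu> \<nu> R P L mi mj = Min ((\<lambda>l. quad_mismatch R P (\<lambda>u. \<mu> (mob a1 t1 u))
        (\<lambda>u. \<nu> (mob a2 t2 u)) (2 * pi * real l / real L)) ` {1..L})"
      unfolding m using P(3) cball_tanh_subset_ball by (intro dhh_eq_Min_quad_mismatch[OF a(1)]) blast
    ultimately show "\<bar>dR \<mu> \<nu> R zi wj - dhh \<mu> \<nu> R P L mi mj\<bar>
        \<le> ((K\<mu> * Lm + K\<nu> * Lm) * A) * fill_dist R P + (K\<nu> * Lm * (2 * pi) * A) / real L"
      using rotation_discretisation[OF lipschitz_on_pullback[OF \<mu> a(1)] lipschitz_on_pullback[OF \<nu> a(2)] P] H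
      unfolding A_def Lm_def by simp
  qed
qed

end
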